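(* Let $\mathbf{E}\subseteq\mathbf{A}$ be finite symmetric integral relation algebras such that $\mathbf{A}$ is a special extension of $\mathbf{E}$. For every $n\in\omega$, the set $$B_n=\{1'\}\cup\{x^{(i)}:x\text{ a diversity atom of }\mathbf{A},\ i<n\}\cup\{J(a,n):a\text{ a diversity atom of }\mathbf{E}\}$$ is the set of atoms of a subalgebra of $\mathbf{C}_{\mathbf{E}}(\mathbf{A})$.
   Context: Relation algebras are in the sense of Tarski; $1'$ identity, $0'$ its complement, $;$ relative product; integral: $1'$ is an atom; symmetric: $x^{\smile}=x$; a diversity atom is an atom below $0'$. Special extension: $\mathbf{A}$ is a special extension of $\mathbf{E}$ if for all diversity atoms $a,b,c$ of $\mathbf{E}$: (1) if not $a=b=c$ and $a;b\ge c$, then $x;y\ge c$ whenever $x,y$ are atoms of $\mathbf{A}$ with $x\le a$, $y\le b$; (2) if $a;a\ge a$ then $x;y\cdot a\ne0$ whenever $x,y$ are atoms of $\mathbf{A}$ below $a$. The algebra $\mathbf{C}_{\mathbf{E}}(\mathbf{A})$: for each atom $x$ of $\mathbf{A}$ let $c(x)$ be the atom of $\mathbf{E}$ with $x\le c(x)$; $T(i,j,k)$ iff $(i\le j=k)$ or $(j\le k=i)$ or $(k\le i=j)$. Atoms: $1'$ and $x^{(i)}$ for diversity atoms $x$ of $\mathbf{A}$ and $i\in\omega$. $C$ is the set of all permutations of $(1',1',1')$, $(1',x^{(i)},x^{(i)})$, and $(x^{(i)},y^{(j)},z^{(k)})$ with $x;y\ge z$ in $\mathbf{A}$ and ($c(x)=c(y)=c(z)\Rightarrow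 T(i,j,k)$). $\mathbf{C}_{\mathbf{E}}(\mathbf{A})$ is the algebra of all sets of atoms with set Boolean operations, identity $\{1'\}$, converse the identity map, and $X;Y=\{w:\exists u\in X,\exists v\in Y,(u,v,w)\in C\}$. For $a\in\mathbf{A}$ and $n\in\omega$, $J(a,n)$ is the join of all $x^{(i)}$ with $x$ a diversity atom of $\mathbf{A}$, $x\le a$, $n\le i$, together with $1'$ if $1'\le a$. *)

theory Defs
  imports Main
begin

record 'a ra =
  car :: "'a set"
  jn  :: "'a \<Rightarrow> 'a \<Rightarrow> 'a"   (* Boolean join + *)
  mt  :: "'a \<Rightarrow> 'a \<Rightarrow> 'a"   (* Boolean meet \<cdot> *)
  cm  :: "'a \<Rightarrow> 'a"          (* Boolean complement - *)
  zr  :: 'a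
  un  :: 'a                   (* 1 *)
  idt :: 'a                   (* identity 1' *)
  cv  :: "'a \<Rightarrow> 'a"          (* converse *)
  cp  :: "'a \<Rightarrow> 'a \<Rightarrow> 'a"   (* relative product ; *)

definition closed_under :: "'a ra \<Rightarrow> 'a set \<Rightarrow> bool" where
  "closed_under R S \<longleftrightarrow>
     zr R \<in> S \<and> un R \<in> S \<and> idt R \<in> S \<and>
     (\<forall>x\<in>S. cm R x \<in> S \<and> cv R x \<in> S) \<and>
     (\<forall>x\<in>S. \<forall>y\<in>S. jn R x y \<in> S \<and> mt R x y \<in> S \<and> cp R x y \<in> S)"

definition boolean_algebra_on :: "'a ra \<Rightarrow> bool" where
  "boolean_algebra_on R \<longleftrightarrow>
     (\<forall>x\<in>car R. \<forall>y\<in>car R. jn R x y = jn R y x \<and> mt R x y = mt R y x) \<and>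
     (\<forall>x\<in>car R. \<forall>y\<in>car R. \<forall>z\<in>car R.
        jn R (jn R x y) z = jn R x (jn R y z) \<and> mt R (mt R x y) z = mt R x (mt R y z) \<and>
        mt R x (jn R y z) = jn R (mt R x y) (mt R x z) \<and>
        jn R x (mt R y z) = mt R (jn R x y) (jn R x z)) \<and>
     (\<forall>x\<in>car R. \<forall>y\<in>car R. jn R x (mt R x y) = x \<and> mt R x (jn R x y) = x) \<and>
     (\<forall>x\<in>car R. jn R x (zr R) = x \<and> mt R x (un R) = x \<and>
                 jn R x (cm R x) = un R \<and> mt R x (cm R x) = zr R)"

definition relation_algebra :: "'a ra \<Rightarrow> bool" where
  "relation_algebra R \<longleftrightarrow> closed_under R (car R) \<and> boolean_algebra_on R \<and>
     (\<forall>x\<in>car R. \<forall>y\<in>car R. \<forall>z\<in>car R. cp R (cp R x y) z = cp R x (cp R y z) \<and>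
        cp R (jn R x y) z = jn R (cp R x z) (cp R y z)) \<and>
     (\<forall>x\<in>car R. cp R x (idt R) = x \<and> cv R (cv R x) = x) \<and>
     (\<forall>x\<in>car R. \<forall>y\<in>car R. cv R (jn R x y) = jn R (cv R x) (cv R y) \<and>
        cv R (cp R x y) = cp R (cv R y) (cv R x) \<and>
        jn R (cp R (cv R x) (cm R (cp R x y))) (cm R y) = cm R y)"

definition le :: "'a ra \<Rightarrow> 'a \<Rightarrow> 'a \<Rightarrow> bool" where
  "le R x y \<longleftrightarrow> jn R x y = y"

text \<open>Atoms of the subalgebra with universe S (for S = car R: atoms of R).\<close>
definition atom_in :: "'a ra \<Rightarrow> 'a set \<Rightarrow> 'a \<Rightarrow> bool" where
  "atom_in R S x \<longleftrightarrow> x \<in> S \<and> x \<noteq> zr R \<and> (\<forall>y\<in>S. le R y x \<longrightarrow> y = zr R \<or> y = x)"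

definition div_atom_in :: "'a ra \<Rightarrow> 'a set \<Rightarrow> 'a \<Rightarrow> bool" where
  "div_atom_in R S x \<longleftrightarrow> atom_in R S x \<and> le R x (cm R (idt R))"

definition subalgebra :: "'a ra \<Rightarrow> 'a set \<Rightarrow> bool" where
  "subalgebra R S \<longleftrightarrow> S \<subseteq> car R \<and> closed_under R S"

definition integral_on :: "'a ra \<Rightarrow> 'a set \<Rightarrow> bool" where
  "integral_on R S \<longleftrightarrow> atom_in R S (idt R)"

definition symmetric_on :: "'a ra \<Rightarrow> 'a set \<Rightarrow> bool" where
  "symmetric_on R S \<longleftrightarrow> (\<forall>x\<in>S. cv R x = x)"

definition special_extension :: "'a ra \<Rightarrow> 'a set \<Rightarrow> bool" where
  "special_extension A E \<longleftrightarrow>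
    (\<forall>a b c. div_atom_in A E a \<and> div_atom_in A E b \<and> div_atom_in A E c \<longrightarrow>
       ((\<not> (a = b \<and> b = c) \<and> le A c (cp A a b)) \<longrightarrow>
          (\<forall>x y. atom_in A (car A) x \<and> atom_in A (car A) y \<and> le A x a \<and> le A y b
                 \<longrightarrow> le A c (cp A x y))) \<and>
       (le A a (cp A a a) \<longrightarrow>
          (\<forall>x y. atom_in A (car A) x \<and> atom_in A (car A) y \<and> le A x a \<and> le A y a
                 \<longrightarrow> mt A (cp A x y) a \<noteq> zr A)))"

datatype 'a catom = CId | CX 'a nat

definition catom_of :: "'a ra \<Rightarrow> 'a set \<Rightarrow> 'a \<Rightarrow> 'a" where
  "catom_of A E x = (THE e. atom_in A E e \<and> le A x e)"

definition Trel :: "nat \<Rightarrow> nat \<Rightarrow> nat \<Rightarrow> bool" where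
  "Trel i j k \<longleftrightarrow> (i \<le> j \<and> j = k) \<or> (j \<le> k \<and> k = i) \<or> (k \<le> i \<and> i = j)"

definition C_atoms :: "'a ra \<Rightarrow> 'a catom set" where
  "C_atoms A = {CId} \<union> {CX x i | x i. div_atom_in A (car A) x}"

definition basic_cycle :: "'a ra \<Rightarrow> 'a set \<Rightarrow> 'a catom \<Rightarrow> 'a catom \<Rightarrow> 'a catom \<Rightarrow> bool" where
  "basic_cycle A E u v w \<longleftrightarrow>
     (u = CId \<and> v = CId \<and> w = CId) \<or>
     (\<exists>x i. div_atom_in A (car A) x \<and> u = CId \<and> v = CX x i \<and> w = CX x i) \<or>
     (\<exists>x y z i j k. div_atom_in A (car A) x \<and> div_atom_in A (car A) y \<and>
        div_atom_in A (car A) z \<and> u = CX x i \<and> v = CX y j \<and> w = CX z k \<and>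
        le A z (cp A x y) \<and>
        (catom_of A E x = catom_of A E y \<and> catom_of A E y = catom_of A E z \<longrightarrow> Trel i j k))"

definition C_cycle :: "'a ra \<Rightarrow> 'a set \<Rightarrow> 'a catom \<Rightarrow> 'a catom \<Rightarrow> 'a catom \<Rightarrow> bool" where
  "C_cycle A E u v w \<longleftrightarrow>
     basic_cycle A E u v w \<or> basic_cycle A E u w v \<or> basic_cycle A E v u w \<or>
     basic_cycle A E v w u \<or> basic_cycle A E w u v \<or> basic_cycle A E w v u"

definition CEA :: "'a ra \<Rightarrow> 'a set \<Rightarrow> 'a catom set ra" where
  "CEA A E = \<lparr> car = Pow (C_atoms A),
      jn = (\<lambda>X Y. X \<union> Y), mt = (\<lambda>X Y. X \<inter> Y), cm = (\<lambda>X. C_atoms A - X),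
      zr = {}, un = C_atoms A, idt = {CId}, cv = (\<lambda>X. X),
      cp = (\<lambda>X Y. {w. \<exists>u\<in>X. \<exists>v\<in>Y. C_cycle A E u v w}) \<rparr>"

definition Jset :: "'a ra \<Rightarrow> 'a \<Rightarrow> nat \<Rightarrow> 'a catom set" where
  "Jset A a n = {CX x i | x i. div_atom_in A (car A) x \<and> le A x a \<and> n \<le> i}
               \<union> (if le A (idt A) a then {CId} else {})"

definition Bset :: "'a ra \<Rightarrow> 'a set \<Rightarrow> nat \<Rightarrow> 'a catom set set" where
  "Bset A E n = {{CId}} \<union> {{CX x i} | x i. div_atom_in A (car A) x \<and> i < n}
               \<union> {Jset A a n | a. div_atom_in A E a}"

end

theory Submission
  imports Defs "HOL-Library.Disjoint_Sets"
begin

(* The sets in B_n partition the atoms of C_E(A), so the unions of blocks form a Boolean subalgebra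
   of the full set algebra whose atoms are exactly the blocks. Closure under relative product reduces
   to a coherence property: if a cycle (u, v, w) meets the blocks b1, b2, b3, then every w' in b3
   lies on a cycle through b1 and b2. Only the blocks J(e, n) have more than one element, and for
   w' = z'^(k') in J(c(z), n) with w = z^(k) there are two cases. If c(x), c(y), c(z) are not all
   equal, clause (1) of special extensions gives z' <= x;y outright. If they coincide, clause (2)
   yields an atom s below c(z) with z' <= x;s, and giving s (and x, if its block is a J) the index
   k' satisfies the condition T. *)

section \<open>Unions of blocks of a partition\<close>

definition block_unions :: "'b set \<Rightarrow> 'b set set \<Rightarrow> 'b set set" where
  "block_unions U P = {X. X \<subseteq> U \<and> (\<forall>b\<in>P. b \<subseteq> X \<or> b \<inter> X = {})}"

lemma partition_on_block_eq:
  "partition_on U P \<Longrightarrow> b \<in> P \<Longrightarrow> b' \<in> P \<Longrightarrow> w \<in> b \<Longrightarrow> w \<in> b' \<Longrightarrow> b = b'"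
  unfolding partition_on_def pairwise_def disjnt_def by blast

lemma block_unions_closed:
  assumes "partition_on U P"
  shows "{} \<in> block_unions U P" "U \<in> block_unions U P"
    and "b \<in> P \<Longrightarrow> b \<in> block_unions U P"
    and "X \<in> block_unions U P \<Longrightarrow> U - X \<in> block_unions U P"
    and "X \<in> block_unions U P \<Longrightarrow> Y \<in> block_unions U P \<Longrightarrow> X \<union> Y \<in> block_unions U P"
    and "X \<in> block_unions U P \<Longrightarrow> Y \<in> block_unions U P \<Longrightarrow> X \<inter> Y \<in> block_unions U P"
  using assms partition_on_block_eq[OF assms]
  unfolding block_unions_def partition_on_def by blast+

lemma block_unions_product_closed:
  assumes P: "partition_on U P"
    and R_U: "\<And>u v w. R u v w \<Longrightarrow> w \<in> U"
    and coherent: "\<And>b1 b2 b3 u v w w'. b1 \<in> P \<Longrightarrow> b2 \<in> P \<Longrightarrow> b3 \<in> P \<Longrightarrow>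
        u \<in> b1 \<Longrightarrow> v \<in> b2 \<Longrightarrow> w \<in> b3 \<Longrightarrow> w' \<in> b3 \<Longrightarrow> R u v w \<Longrightarrow>
        \<exists>u'\<in>b1. \<exists>v'\<in>b2. R u' v' w'"
    and X: "X \<in> block_unions U P" and Y: "Y \<in> block_unions U P"
  shows "{w. \<exists>u\<in>X. \<exists>v\<in>Y. R u v w} \<in> block_unions U P"
  unfolding block_unions_def
proof (intro CollectI conjI ballI)
  show "{w. \<exists>u\<in>X. \<exists>v\<in>Y. R u v w} \<subseteq> U" using R_U by blast
next
  fix b3 assume b3: "b3 \<in> P"
  show "b3 \<subseteq> {w. \<exists>u\<in>X. \<exists>v\<in>Y. R u v w} \<or> b3 \<inter> {w. \<exists>u\<in>X. \<exists>v\<in>Y. R u v w} = {}"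
  proof (rule disjCI)
    assume "b3 \<inter> {w. \<exists>u\<in>X. \<exists>v\<in>Y. R u v w} \<noteq> {}"
    then obtain u v w where uvw: "w \<in> b3" "u \<in> X" "v \<in> Y" "R u v w" by blast
    have "u \<in> U" "v \<in> U" using X Y uvw unfolding block_unions_def by auto
    then obtain b1 b2 where b12: "b1 \<in> P" "u \<in> b1" "b2 \<in> P" "v \<in> b2"
      using partition_onD1[OF P] by blast
    have "b1 \<subseteq> X" "b2 \<subseteq> Y" using X Y b12 uvw unfolding block_unions_def by blast+
    then show "b3 \<subseteq> {w. \<exists>u\<in>X. \<exists>v\<in>Y. R u v w}"
      using coherent[OF b12(1) b12(3) b3 b12(2) b12(4) uvw(1) _ uvw(4)] by blast
  qed
qed

lemma minimal_block_unions_iff: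
  assumes "partition_on U P"
  shows "(b \<in> block_unions U P \<and> b \<noteq> {} \<and> (\<forall>Y\<in>block_unions U P. Y \<subseteq> b \<longrightarrow> Y = {} \<or> Y = b))
    \<longleftrightarrow> b \<in> P"
proof
  assume b: "b \<in> block_unions U P \<and> b \<noteq> {} \<and> (\<forall>Y\<in>block_unions U P. Y \<subseteq> b \<longrightarrow> Y = {} \<or> Y = b)"
  then obtain w where "w \<in> b" by blast
  moreover have "b \<subseteq> U" using b unfolding block_unions_def by blast
  ultimately obtain b' where b': "b' \<in> P" "w \<in> b'" using partition_onD1[OF assms] by blast
  then have "b' \<subseteq> b" using b \<open>w \<in> b\<close> unfolding block_unions_def by blast
  then have "b' = b" using b b' block_unions_closed(3)[OF assms] partition_onD3[OF assms] by blast
  then show "b \<in> P" using b' by simp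
next
  assume "b \<in> P"
  then show "b \<in> block_unions U P \<and> b \<noteq> {} \<and> (\<forall>Y\<in>block_unions U P. Y \<subseteq> b \<longrightarrow> Y = {} \<or> Y = b)"
    using block_unions_closed(3)[OF assms] partition_onD3[OF assms]
    unfolding block_unions_def by blast
qed

lemma atom_in_CEA_iff:
  "atom_in (CEA A E) S b \<longleftrightarrow> b \<in> S \<and> b \<noteq> {} \<and> (\<forall>Y\<in>S. Y \<subseteq> b \<longrightarrow> Y = {} \<or> Y = b)"
  unfolding atom_in_def le_def CEA_def by (auto simp: subset_Un_eq)

lemma C_cycle_swap: "C_cycle A E u v w \<longleftrightarrow> C_cycle A E v u w"
  unfolding C_cycle_def by blast

lemma C_cycle_C_atoms: "C_cycle A E u v w \<Longrightarrow> w \<in> C_atoms A"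
  unfolding C_cycle_def basic_cycle_def C_atoms_def by auto

lemma C_cycle_CId_left: "C_cycle A E CId v w \<longleftrightarrow> v = w \<and> v \<in> C_atoms A"
  unfolding C_cycle_def basic_cycle_def C_atoms_def by (cases v; cases w) auto

lemma C_cycle_CId_middle: "C_cycle A E u CId w \<longleftrightarrow> u = w \<and> u \<in> C_atoms A"
  using C_cycle_CId_left C_cycle_swap by metis

lemma Trel_swap12: "Trel i j k = Trel j i k"
  and Trel_swap23: "Trel i j k = Trel i k j"
  unfolding Trel_def by arith+

section \<open>Finite symmetric relation algebras\<close>

locale relation_alg =
  fixes A :: "'a ra"
  assumes ra: "relation_algebra A"
begin

lemma car_closed: "closed_under A (car A)"
  using ra unfolding relation_algebra_def by blast

lemma car_subalgebra: "subalgebra A (car A)"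
  using car_closed unfolding subalgebra_def by blast

lemma zr_car[simp]: "zr A \<in> car A"
  and un_car[simp]: "un A \<in> car A"
  and idt_car[simp]: "idt A \<in> car A"
  and cm_car[simp]: "x \<in> car A \<Longrightarrow> cm A x \<in> car A"
  and mt_car[simp]: "x \<in> car A \<Longrightarrow> y \<in> car A \<Longrightarrow> mt A x y \<in> car A"
  and cp_car[simp]: "x \<in> car A \<Longrightarrow> y \<in> car A \<Longrightarrow> cp A x y \<in> car A"
  using car_closed unfolding closed_under_def by blast+

lemma jn_comm: "x \<in> car A \<Longrightarrow> y \<in> car A \<Longrightarrow> jn A x y = jn A y x"
  and mt_comm: "x \<in> car A \<Longrightarrow> y \<in> car A \<Longrightarrow> mt A x y = mt A y x"
  and jn_assoc: "x \<in> car A \<Longrightarrow> y \<in> car A \<Longrightarrow> z \<in> car A \<Longrightarrow> jn A (jn A x y) z = jn A x (jn A y z)"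
  and mt_assoc: "x \<in> car A \<Longrightarrow> y \<in> car A \<Longrightarrow> z \<in> car A \<Longrightarrow> mt A (mt A x y) z = mt A x (mt A y z)"
  and mt_jn_distrib: "x \<in> car A \<Longrightarrow> y \<in> car A \<Longrightarrow> z \<in> car A \<Longrightarrow>
      mt A x (jn A y z) = jn A (mt A x y) (mt A x z)"
  and jn_mt_absorb: "x \<in> car A \<Longrightarrow> y \<in> car A \<Longrightarrow> jn A x (mt A x y) = x"
  and mt_jn_absorb: "x \<in> car A \<Longrightarrow> y \<in> car A \<Longrightarrow> mt A x (jn A x y) = x"
  and jn_zr: "x \<in> car A \<Longrightarrow> jn A x (zr A) = x"
  and mt_un: "x \<in> car A \<Longrightarrow> mt A x (un A) = x"
  and jn_cm: "x \<in> car A \<Longrightarrow> jn A x (cm A x) = un A"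
  and mt_cm: "x \<in> car A \<Longrightarrow> mt A x (cm A x) = zr A"
  using ra unfolding relation_algebra_def boolean_algebra_on_def by blast+

lemma cp_jn_distrib: "x \<in> car A \<Longrightarrow> y \<in> car A \<Longrightarrow> z \<in> car A \<Longrightarrow>
    cp A (jn A x y) z = jn A (cp A x z) (cp A y z)"
  and cv_cp: "x \<in> car A \<Longrightarrow> y \<in> car A \<Longrightarrow> cv A (cp A x y) = cp A (cv A y) (cv A x)"
  and tarski: "x \<in> car A \<Longrightarrow> y \<in> car A \<Longrightarrow>
    jn A (cp A (cv A x) (cm A (cp A x y))) (cm A y) = cm A y"
  using ra unfolding relation_algebra_def by blast+

lemma ra_le_refl: "x \<in> car A \<Longrightarrow> le A x x"
  unfolding le_def by (metis jn_mt_absorb mt_jn_absorb jn_zr zr_car)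

lemma ra_le_antisym: "x \<in> car A \<Longrightarrow> y \<in> car A \<Longrightarrow> le A x y \<Longrightarrow> le A y x \<Longrightarrow> x = y"
  unfolding le_def by (metis jn_comm)

lemma ra_le_trans:
  "x \<in> car A \<Longrightarrow> y \<in> car A \<Longrightarrow> z \<in> car A \<Longrightarrow> le A x y \<Longrightarrow> le A y z \<Longrightarrow> le A x z"
  unfolding le_def by (metis jn_assoc)

lemma le_iff_mt: "x \<in> car A \<Longrightarrow> y \<in> car A \<Longrightarrow> le A x y \<longleftrightarrow> mt A x y = x"
  unfolding le_def by (metis jn_mt_absorb mt_jn_absorb jn_comm mt_comm)

lemma mt_le_left: "x \<in> car A \<Longrightarrow> y \<in> car A \<Longrightarrow> le A (mt A x y) x"
  by (metis le_iff_mt mt_car mt_comm mt_assoc ra_le_refl)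

lemma mt_le_right: "x \<in> car A \<Longrightarrow> y \<in> car A \<Longrightarrow> le A (mt A x y) y"
  by (metis mt_le_left mt_comm)

lemma le_mtI: "x \<in> car A \<Longrightarrow> y \<in> car A \<Longrightarrow> z \<in> car A \<Longrightarrow> le A z x \<Longrightarrow> le A z y \<Longrightarrow> le A z (mt A x y)"
  by (metis le_iff_mt mt_car mt_assoc)

lemma le_zr_iff: "x \<in> car A \<Longrightarrow> le A x (zr A) \<longleftrightarrow> x = zr A"
  unfolding le_def by (metis jn_zr jn_comm zr_car)

lemma mt_zr_le_cm: "x \<in> car A \<Longrightarrow> y \<in> car A \<Longrightarrow> mt A x y = zr A \<Longrightarrow> le A x (cm A y)"
proof -
  assume xy: "x \<in> car A" "y \<in> car A" "mt A x y = zr A"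
  have "x = mt A x (jn A y (cm A y))" using xy by (simp add: jn_cm mt_un)
  also have "\<dots> = mt A x (cm A y)"
    using xy by (simp add: mt_jn_distrib) (metis jn_comm jn_zr zr_car mt_car cm_car)
  finally show ?thesis using xy by (simp add: le_iff_mt)
qed

lemma le_and_le_cm: "x \<in> car A \<Longrightarrow> y \<in> car A \<Longrightarrow> le A x y \<Longrightarrow> le A x (cm A y) \<Longrightarrow> x = zr A"
  by (metis le_mtI le_zr_iff mt_cm cm_car)

lemma cp_mono_left:
  "x \<in> car A \<Longrightarrow> x' \<in> car A \<Longrightarrow> y \<in> car A \<Longrightarrow> le A x x' \<Longrightarrow> le A (cp A x y) (cp A x' y)"
  unfolding le_def by (metis cp_jn_distrib)

lemma atom_le_or_disjoint:
  assumes S: "subalgebra A S" and x: "atom_in A S x" and y: "y \<in> S"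
  shows "le A x y \<or> mt A x y = zr A"
proof -
  have S_car: "S \<subseteq> car A" and "mt A x y \<in> S"
    using S x y unfolding subalgebra_def closed_under_def atom_in_def by blast+
  moreover have "le A (mt A x y) x" using mt_le_left S_car x y unfolding atom_in_def by blast
  ultimately have "mt A x y = zr A \<or> mt A x y = x" using x unfolding atom_in_def by blast
  then show ?thesis using le_iff_mt S_car x y unfolding atom_in_def by blast
qed

lemma finite_has_le_minimal:
  assumes "finite D" "D \<subseteq> car A" "p \<in> D"
  shows "\<exists>e\<in>D. \<forall>y\<in>D. le A y e \<longrightarrow> y = e"
proof -
  obtain e where e: "e \<in> D" "\<And>y. y \<in> D \<Longrightarrow> card {w\<in>D. le A w e} \<le> card {w\<in>D. le A w y}"
    using ex_has_least_nat[of "\<lambda>e. e \<in> D" p "\<lambda>e. card {w\<in>D. le A w e}"] assms(3) by blast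
  have "y = e" if y: "y \<in> D" "le A y e" for y
  proof -
    have "{w\<in>D. le A w y} \<subseteq> {w\<in>D. le A w e}" using y e assms(2) ra_le_trans by blast
    then have "{w\<in>D. le A w y} = {w\<in>D. le A w e}"
      using card_seteq e(2)[OF y(1)] assms(1) by (metis (no_types, lifting) finite_subset mem_Collect_eq subsetI)
    then have "le A e y" using e assms(2) ra_le_refl by blast
    then show "y = e" using ra_le_antisym y e assms(2) by blast
  qed
  then show ?thesis using e by blast
qed

lemma atom_below:
  assumes fin: "finite (car A)" and w: "w \<in> car A" "w \<noteq> zr A"
  shows "\<exists>x. atom_in A (car A) x \<and> le A x w"
proof -
  let ?D = "{y\<in>car A. y \<noteq> zr A \<and> le A y w}"
  have "finite ?D" "?D \<subseteq> car A" "w \<in> ?D" using fin w ra_le_refl by auto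
  then obtain e where e: "e \<in> ?D" "\<forall>y\<in>?D. le A y e \<longrightarrow> y = e"
    using finite_has_le_minimal by blast
  have "y = zr A \<or> y = e" if "y \<in> car A" "le A y e" for y
    using that e w(1) ra_le_trans[of y e w] by blast
  then have "atom_in A (car A) e" using e unfolding atom_in_def by blast
  then show ?thesis using e by blast
qed

end

locale symmetric_relation_alg = relation_alg +
  assumes symmetric: "symmetric_on A (car A)"
begin

lemma cp_comm: "x \<in> car A \<Longrightarrow> y \<in> car A \<Longrightarrow> cp A x y = cp A y x"
  using symmetric cv_cp cp_car unfolding symmetric_on_def by metis

lemma cp_mono:
  "x \<in> car A \<Longrightarrow> x' \<in> car A \<Longrightarrow> y \<in> car A \<Longrightarrow> y' \<in> car A \<Longrightarrow> le A x x' \<Longrightarrow> le A y y' \<Longrightarrow>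
    le A (cp A x y) (cp A x' y')"
proof -
  assume c: "x \<in> car A" "x' \<in> car A" "y \<in> car A" "y' \<in> car A" and le: "le A x x'" "le A y y'"
  have "le A (cp A x y) (cp A x' y)" using cp_mono_left c le by blast
  moreover have "le A (cp A x' y) (cp A x' y')" using cp_mono_left[of y y' x'] cp_comm c le by simp
  ultimately show ?thesis using ra_le_trans c by (meson cp_car)
qed

lemma atom_cycle_law:
  assumes x: "atom_in A (car A) x" and y: "atom_in A (car A) y" and z: "atom_in A (car A) z"
    and zxy: "le A z (cp A x y)"
  shows "le A y (cp A x z)"
proof (rule ccontr)
  have c: "x \<in> car A" "y \<in> car A" "z \<in> car A" using x y z unfolding atom_in_def by auto
  assume "\<not> le A y (cp A x z)"
  then have "mt A y (cp A x z) = zr A"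
    using atom_le_or_disjoint[OF car_subalgebra y cp_car[OF c(1,3)]] by blast
  then have "le A y (cm A (cp A x z))" using mt_zr_le_cm c by simp
  then have "le A (cp A x y) (cp A x (cm A (cp A x z)))" using cp_mono c ra_le_refl by simp
  moreover have "le A (cp A x (cm A (cp A x z))) (cm A z)"
    using tarski[of x z] c symmetric unfolding le_def symmetric_on_def by simp
  ultimately have "le A (cp A x y) (cm A z)"
    using ra_le_trans[of "cp A x y" "cp A x (cm A (cp A x z))" "cm A z"] c by simp
  then have "le A z (cm A z)" using zxy ra_le_trans[of z "cp A x y" "cm A z"] c by simp
  then show False using le_and_le_cm c ra_le_refl z unfolding atom_in_def by blast
qed

end

section \<open>Special extensions\<close>

locale special_extension_setting = symmetric_relation_alg A for A :: "'a ra" +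
  fixes E :: "'a set"
  assumes finite_car: "finite (car A)"
    and E_subalgebra: "subalgebra A E"
    and E_integral: "integral_on A E"
    and special: "special_extension A E"
begin

abbreviation div_atom :: "'a \<Rightarrow> bool" where
  "div_atom x \<equiv> div_atom_in A (car A) x"

abbreviation eatom :: "'a \<Rightarrow> 'a" where
  "eatom x \<equiv> catom_of A E x"

lemma E_car: "x \<in> E \<Longrightarrow> x \<in> car A"
  using E_subalgebra unfolding subalgebra_def by blast

lemma E_closed: "idt A \<in> E" "un A \<in> E" "x \<in> E \<Longrightarrow> cm A x \<in> E"
    "x \<in> E \<Longrightarrow> y \<in> E \<Longrightarrow> mt A x y \<in> E" "x \<in> E \<Longrightarrow> y \<in> E \<Longrightarrow> cp A x y \<in> E"
  using E_subalgebra unfolding subalgebra_def closed_under_def by blast+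

lemma div_atom_E_car: "div_atom_in A E a \<Longrightarrow> a \<in> car A"
  using E_car unfolding div_atom_in_def atom_in_def by blast

lemma div_atom_car: "div_atom x \<Longrightarrow> x \<in> car A"
  unfolding div_atom_in_def atom_in_def by blast

lemma le_div_atom_E: "atom_in A (car A) x \<Longrightarrow> div_atom_in A E a \<Longrightarrow> le A x a \<Longrightarrow> div_atom x"
  using ra_le_trans[of x a] div_atom_E_car unfolding div_atom_in_def atom_in_def by auto

lemma idt_not_le_div_atom_E: "div_atom_in A E a \<Longrightarrow> \<not> le A (idt A) a"
proof
  assume a: "div_atom_in A E a" and "le A (idt A) a"
  then have "le A (idt A) (cm A (idt A))"
    using ra_le_trans div_atom_E_car unfolding div_atom_in_def by (meson cm_car idt_car)
  then have "idt A = zr A" using le_and_le_cm[OF idt_car idt_car ra_le_refl[OF idt_car]] by blast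
  then show False using E_integral unfolding integral_on_def atom_in_def by blast
qed

lemma E_atom_above:
  assumes x: "atom_in A (car A) x"
  shows "\<exists>e. atom_in A E e \<and> le A x e"
proof -
  have xc: "x \<in> car A" "x \<noteq> zr A" using x unfolding atom_in_def by auto
  let ?D = "{y\<in>E. le A x y}"
  have "?D \<subseteq> car A" using E_car by blast
  moreover have "un A \<in> ?D" using E_closed(2) le_iff_mt[OF xc(1) un_car] mt_un[OF xc(1)] by simp
  moreover have "finite ?D" using calculation(1) finite_car by (rule finite_subset)
  ultimately obtain e where e: "e \<in> E" "le A x e" "\<And>y. y \<in> E \<Longrightarrow> le A x y \<Longrightarrow> le A y e \<Longrightarrow> y = e"
    using finite_has_le_minimal[of ?D "un A"] by blast
  have ec: "e \<in> car A" using e E_car by blast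
  have "y = zr A \<or> y = e" if y: "y \<in> E" "le A y e" for y
  proof (cases "le A x y")
    case True then show ?thesis using e y by blast
  next
    case False
    have yc: "y \<in> car A" using y E_car by blast
    have "mt A x y = zr A" using False atom_le_or_disjoint[OF car_subalgebra x yc] by blast
    then have "le A x (cm A y)" using mt_zr_le_cm xc yc by blast
    then have "le A x (mt A e (cm A y))" using le_mtI[OF ec cm_car[OF yc] xc(1) e(2)] by blast
    moreover have "mt A e (cm A y) \<in> E" using E_closed y e by blast
    moreover have "le A (mt A e (cm A y)) e" using mt_le_left ec yc by simp
    ultimately have "mt A e (cm A y) = e" using e(3) by blast
    then have "le A e (cm A y)" using mt_le_right[OF ec cm_car[OF yc]] by simp
    then have "le A y (cm A y)" using ra_le_trans[OF yc ec cm_car[OF yc]] y by blast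
    then show ?thesis using le_and_le_cm yc ra_le_refl by blast
  qed
  moreover have "e \<noteq> zr A" using e(2) xc le_zr_iff[OF xc(1)] by auto
  ultimately show ?thesis using e unfolding atom_in_def by blast
qed

lemma E_atom_above_div_atom:
  assumes x: "div_atom x"
  shows "\<exists>e. div_atom_in A E e \<and> le A x e"
proof -
  obtain e where e: "atom_in A E e" "le A x e"
    using E_atom_above x unfolding div_atom_in_def by blast
  have xc: "x \<in> car A" "x \<noteq> zr A" "le A x (cm A (idt A))" using x unfolding div_atom_in_def atom_in_def by auto
  have ec: "e \<in> car A" "e \<noteq> zr A" using e E_car unfolding atom_in_def by auto
  have "le A e (idt A) \<or> mt A e (idt A) = zr A"
    using atom_le_or_disjoint[OF E_subalgebra e(1) E_closed(1)] .
  moreover have "\<not> le A e (idt A)"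
  proof
    assume "le A e (idt A)"
    then have "e = idt A" using E_integral e(1) ec unfolding integral_on_def atom_in_def by blast
    then show False using le_and_le_cm[of x "idt A"] xc e(2) by simp
  qed
  ultimately have "le A e (cm A (idt A))" using mt_zr_le_cm ec by simp
  then show ?thesis using e unfolding div_atom_in_def by blast
qed

lemma E_atom_unique:
  assumes "x \<in> car A" "x \<noteq> zr A" "atom_in A E e1" "atom_in A E e2" "le A x e1" "le A x e2"
  shows "e1 = e2"
proof -
  have c: "e1 \<in> E" "e2 \<in> E" "e1 \<in> car A" "e2 \<in> car A" using assms E_car unfolding atom_in_def by auto
  have "le A x (mt A e1 e2)" using le_mtI assms c by blast
  then have "mt A e1 e2 \<noteq> zr A" using le_zr_iff assms(1,2) by force
  moreover have "mt A e1 e2 \<in> E" using E_closed c by blast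
  ultimately have "mt A e1 e2 = e1" "mt A e1 e2 = e2"
    using assms(3,4) mt_le_left mt_le_right c unfolding atom_in_def by blast+
  then show ?thesis by simp
qed

lemma eatom_div_atom:
  assumes "div_atom x"
  shows "div_atom_in A E (eatom x) \<and> le A x (eatom x)"
proof -
  obtain e where e: "div_atom_in A E e" "le A x e" using E_atom_above_div_atom assms by blast
  have "eatom x = e"
    unfolding catom_of_def
  proof (rule the_equality)
    show "atom_in A E e \<and> le A x e" using e unfolding div_atom_in_def by blast
    show "atom_in A E e' \<and> le A x e' \<Longrightarrow> e' = e" for e'
      using E_atom_unique e assms unfolding div_atom_in_def atom_in_def by blast
  qed
  then show ?thesis using e by simp
qed

lemma le_div_atom_E_iff:
  assumes x: "div_atom x" and a: "div_atom_in A E a"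
  shows "le A x a \<longleftrightarrow> eatom x = a"
proof
  assume "le A x a"
  moreover have "x \<in> car A" "x \<noteq> zr A" using x unfolding div_atom_in_def atom_in_def by auto
  ultimately show "eatom x = a"
    using E_atom_unique eatom_div_atom[OF x] a unfolding div_atom_in_def by blast
qed (use eatom_div_atom[OF x] in blast)

lemma div_atom_E_nonempty:
  assumes a: "div_atom_in A E a"
  shows "\<exists>x. div_atom x \<and> eatom x = a"
proof -
  have "a \<in> car A" "a \<noteq> zr A" using a div_atom_E_car unfolding div_atom_in_def atom_in_def by auto
  then obtain x where "atom_in A (car A) x" "le A x a" using atom_below finite_car by blast
  then show ?thesis using le_div_atom_E le_div_atom_E_iff a by blast
qed

lemma special_extension_distinct:
  "div_atom_in A E a \<Longrightarrow> div_atom_in A E b \<Longrightarrow> div_atom_in A E c \<Longrightarrow> \<not> (a = b \<and> b = c) \<Longrightarrow>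
    le A c (cp A a b) \<Longrightarrow> atom_in A (car A) x \<Longrightarrow> atom_in A (car A) y \<Longrightarrow> le A x a \<Longrightarrow> le A y b \<Longrightarrow>
    le A c (cp A x y)"
  using special unfolding special_extension_def by blast

lemma special_extension_equal:
  "div_atom_in A E a \<Longrightarrow> le A a (cp A a a) \<Longrightarrow> atom_in A (car A) x \<Longrightarrow> atom_in A (car A) y \<Longrightarrow>
    le A x a \<Longrightarrow> le A y a \<Longrightarrow> mt A (cp A x y) a \<noteq> zr A"
  using special unfolding special_extension_def by blast

lemma eatom_le_cp:
  assumes x: "div_atom x" and y: "div_atom y" and z: "div_atom z" and zxy: "le A z (cp A x y)"
  shows "le A (eatom z) (cp A (eatom x) (eatom y))"
proof -
  have c: "x \<in> car A" "y \<in> car A" "z \<in> car A" using x y z div_atom_car by auto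
  have e: "div_atom_in A E (eatom x)" "div_atom_in A E (eatom y)" "div_atom_in A E (eatom z)"
      "le A x (eatom x)" "le A y (eatom y)" "le A z (eatom z)"
    using eatom_div_atom x y z by auto
  have ec: "eatom x \<in> E" "eatom y \<in> E" "eatom z \<in> car A"
    using e(1-3) div_atom_E_car unfolding div_atom_in_def atom_in_def by auto
  have "le A z (cp A (eatom x) (eatom y))"
    using zxy cp_mono[OF c(1) _ c(2) _ e(4,5)] ra_le_trans[of z "cp A x y"] c ec E_car by simp
  then have "le A z (mt A (eatom z) (cp A (eatom x) (eatom y)))"
    using le_mtI c ec e(6) E_car by simp
  then have "mt A (eatom z) (cp A (eatom x) (eatom y)) \<noteq> zr A"
    using le_zr_iff z c unfolding div_atom_in_def atom_in_def by auto
  then show ?thesis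
    using atom_le_or_disjoint[OF E_subalgebra _ E_closed(5)[OF ec(1,2)]] e(3)
    unfolding div_atom_in_def by blast
qed

lemma cycle_across_classes:
  assumes "div_atom x" "div_atom y" "div_atom z" "le A z (cp A x y)"
    and distinct: "\<not> (eatom x = eatom y \<and> eatom y = eatom z)"
    and "div_atom x'" "div_atom y'" "div_atom z'"
    and "eatom x' = eatom x" "eatom y' = eatom y" "eatom z' = eatom z"
  shows "le A z' (cp A x' y')"
proof -
  have "le A (eatom z) (cp A x' y')"
    using special_extension_distinct[OF _ _ _ distinct eatom_le_cp[OF assms(1-4)]]
      eatom_div_atom assms(1-3,6-10) unfolding div_atom_in_def by metis
  moreover have "le A z' (eatom z)" using eatom_div_atom[OF assms(8)] assms(11) by simp
  moreover have "eatom z \<in> car A" using eatom_div_atom[OF assms(3)] div_atom_E_car by blast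
  ultimately show ?thesis
    using ra_le_trans[of z' "eatom z" "cp A x' y'"] div_atom_car assms(6-8) by simp
qed

lemma cycle_within_class:
  assumes "div_atom x" "div_atom y" "div_atom z" "le A z (cp A x y)"
    and "eatom x = e" "eatom y = e" "eatom z = e"
    and p: "div_atom p" "eatom p = e" and r: "div_atom r" "eatom r = e"
  shows "\<exists>s. div_atom s \<and> eatom s = e \<and> le A r (cp A p s)"
proof -
  have e: "div_atom_in A E e" "e \<in> car A"
    using eatom_div_atom[OF assms(1)] div_atom_E_car assms(5) by auto
  have pr: "p \<in> car A" "r \<in> car A" "le A p e" "le A r e"
    using div_atom_car[OF p(1)] div_atom_car[OF r(1)] eatom_div_atom[OF p(1)] eatom_div_atom[OF r(1)] p(2) r(2)
    by auto
  have "le A e (cp A e e)" using eatom_le_cp[OF assms(1-4)] assms(5-7) by simp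
  then have "mt A (cp A p r) e \<noteq> zr A"
    using special_extension_equal[OF e(1)] p r pr unfolding div_atom_in_def by blast
  moreover have prc: "cp A p r \<in> car A" using pr by simp
  ultimately obtain s where s: "atom_in A (car A) s" "le A s (mt A (cp A p r) e)"
    using atom_below[OF finite_car mt_car[OF prc e(2)]] by blast
  have sc: "s \<in> car A" using s unfolding atom_in_def by blast
  have "le A s (cp A p r)"
    using ra_le_trans[OF sc mt_car[OF prc e(2)] prc s(2) mt_le_left[OF prc e(2)]] .
  moreover have "le A s e"
    using ra_le_trans[OF sc mt_car[OF prc e(2)] e(2) s(2) mt_le_right[OF prc e(2)]] .
  moreover from this have "div_atom s" using le_div_atom_E s e by blast
  moreover have "le A r (cp A p s)"
    using atom_cycle_law p r s calculation unfolding div_atom_in_def by blast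
  ultimately show ?thesis using le_div_atom_E_iff e by blast
qed

subsection \<open>The blocks B_n\<close>

lemma basic_cycle_CX:
  "basic_cycle A E (CX x i) (CX y j) (CX z k) \<longleftrightarrow>
     div_atom x \<and> div_atom y \<and> div_atom z \<and> le A z (cp A x y) \<and>
     (eatom x = eatom y \<and> eatom y = eatom z \<longrightarrow> Trel i j k)"
  unfolding basic_cycle_def by auto

lemma basic_cycle_CX_swap12:
  "basic_cycle A E (CX x i) (CX y j) (CX z k) \<longleftrightarrow> basic_cycle A E (CX y j) (CX x i) (CX z k)"
  unfolding basic_cycle_CX using cp_comm div_atom_car Trel_swap12 by metis

lemma basic_cycle_CX_swap23:
  "basic_cycle A E (CX x i) (CX y j) (CX z k) \<longleftrightarrow> basic_cycle A E (CX x i) (CX z k) (CX y j)"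
  unfolding basic_cycle_CX using atom_cycle_law Trel_swap23 unfolding div_atom_in_def by metis

lemma C_cycle_CX:
  "C_cycle A E (CX x i) (CX y j) (CX z k) \<longleftrightarrow> basic_cycle A E (CX x i) (CX y j) (CX z k)"
  unfolding C_cycle_def using basic_cycle_CX_swap12 basic_cycle_CX_swap23 by metis

lemma CX_in_Jset_iff:
  "div_atom_in A E a \<Longrightarrow> CX x i \<in> Jset A a n \<longleftrightarrow> div_atom x \<and> eatom x = a \<and> n \<le> i"
  unfolding Jset_def using idt_not_le_div_atom_E le_div_atom_E_iff by auto

lemma CId_notin_Jset: "div_atom_in A E a \<Longrightarrow> CId \<notin> Jset A a n"
  unfolding Jset_def using idt_not_le_div_atom_E by auto

lemma Jset_memberE:
  assumes "div_atom_in A E a" "w \<in> Jset A a n"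
  obtains x i where "w = CX x i" "div_atom x" "eatom x = a" "n \<le> i"
  using assms CX_in_Jset_iff CId_notin_Jset by (cases w) auto

lemma Bset_CX_cases:
  "b \<in> Bset A E n \<Longrightarrow> CX x i \<in> b \<Longrightarrow>
    div_atom x \<and> (b = {CX x i} \<and> i < n \<or> n \<le> i \<and> b = Jset A (eatom x) n)"
  unfolding Bset_def using CX_in_Jset_iff by auto

lemma Bset_CId_cases: "b \<in> Bset A E n \<Longrightarrow> CId \<in> b \<Longrightarrow> b = {CId}"
  unfolding Bset_def using CId_notin_Jset by auto

lemma Bset_nonsingleton:
  "b \<in> Bset A E n \<Longrightarrow> w \<in> b \<Longrightarrow> w' \<in> b \<Longrightarrow> w \<noteq> w' \<Longrightarrow> \<exists>a. div_atom_in A E a \<and> b = Jset A a n"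
  unfolding Bset_def by auto

lemma Union_Bset: "\<Union> (Bset A E n) = C_atoms A"
proof (intro equalityI subsetI)
  fix w assume "w \<in> \<Union> (Bset A E n)"
  then show "w \<in> C_atoms A"
    unfolding Bset_def C_atoms_def using Jset_memberE by auto blast
next
  fix w assume w: "w \<in> C_atoms A"
  show "w \<in> \<Union> (Bset A E n)"
  proof (cases w)
    case CId then show ?thesis unfolding Bset_def by blast
  next
    case (CX x i)
    then have x: "div_atom x" using w unfolding C_atoms_def by auto
    show ?thesis
    proof (cases "i < n")
      case True
      then have "{CX x i} \<in> Bset A E n" using x unfolding Bset_def by blast
      then show ?thesis using CX by blast
    next
      case False
      have e: "div_atom_in A E (eatom x)" using eatom_div_atom[OF x] by blast
      then have "Jset A (eatom x) n \<in> Bset A E n" unfolding Bset_def by blast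
      moreover have "w \<in> Jset A (eatom x) n" using CX_in_Jset_iff[OF e] CX x False by simp
      ultimately show ?thesis by blast
    qed
  qed
qed

lemma Bset_block_eq:
  assumes b: "b \<in> Bset A E n" "b' \<in> Bset A E n" and w: "w \<in> b" "w \<in> b'"
  shows "b = b'"
proof (cases w)
  case CId
  then show ?thesis using Bset_CId_cases b w by metis
next
  case (CX x i)
  then show ?thesis using Bset_CX_cases[OF b(1)] Bset_CX_cases[OF b(2)] w by (metis not_le)
qed

lemma Jset_nonempty: "div_atom_in A E a \<Longrightarrow> Jset A a n \<noteq> {}"
proof -
  assume a: "div_atom_in A E a"
  obtain x where "div_atom x" "eatom x = a" using div_atom_E_nonempty[OF a] by blast
  then have "CX x n \<in> Jset A a n" using CX_in_Jset_iff[OF a] by simp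
  then show ?thesis by blast
qed

lemma Bset_partition: "partition_on (C_atoms A) (Bset A E n)"
proof (rule partition_onI)
  show "disjnt b b'" if "b \<in> Bset A E n" "b' \<in> Bset A E n" "b \<noteq> b'" for b b'
    using that Bset_block_eq unfolding disjnt_def by blast
  show "{} \<notin> Bset A E n" using Jset_nonempty unfolding Bset_def by blast
qed (rule Union_Bset)

lemma Jset_coherent_in_class:
  assumes b: "b \<in> Bset A E n" "CX x i \<in> b"
    and xyz: "div_atom x" "div_atom y" "div_atom z" "le A z (cp A x y)"
    and same: "eatom x = eatom z" "eatom y = eatom z"
    and z': "div_atom z'" "eatom z' = eatom z" "n \<le> k'"
  shows "\<exists>u'\<in>b. \<exists>v'\<in>Jset A (eatom z) n. C_cycle A E u' v' (CX z' k')"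
proof -
  obtain s where s: "div_atom s" "eatom s = eatom z" "le A z' (cp A x s)"
    using cycle_within_class[OF xyz same refl xyz(1) same(1) z'(1,2)] by blast
  (* x keeps its index if its block is a singleton and otherwise takes k'; either way T i' k' k' holds *)
  define i' where "i' = (if i < n then i else k')"
  have "CX x i' \<in> b"
    using Bset_CX_cases[OF b] CX_in_Jset_iff eatom_div_atom xyz(1) z'(3) unfolding i'_def by auto
  moreover have "CX s k' \<in> Jset A (eatom z) n"
    using CX_in_Jset_iff[of "eatom z"] eatom_div_atom[OF z'(1)] s z' by simp
  moreover have "C_cycle A E (CX x i') (CX s k') (CX z' k')"
    unfolding C_cycle_CX basic_cycle_CX Trel_def i'_def using xyz s z' by auto
  ultimately show ?thesis by blast
qed

lemma Bset_coherent_CX: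
  assumes b: "b1 \<in> Bset A E n" "b2 \<in> Bset A E n" "CX x i \<in> b1" "CX y j \<in> b2"
    and cyc: "basic_cycle A E (CX x i) (CX y j) (CX z k)" "n \<le> k"
    and z': "div_atom z'" "eatom z' = eatom z" "n \<le> k'"
  shows "\<exists>u'\<in>b1. \<exists>v'\<in>b2. C_cycle A E u' v' (CX z' k')"
proof (cases "eatom x = eatom y \<and> eatom y = eatom z")
  case False
  then have "basic_cycle A E (CX x i) (CX y j) (CX z' k')"
    using cyc z' cycle_across_classes unfolding basic_cycle_CX by metis
  then show ?thesis using b C_cycle_CX by blast
next
  case True
  then have xyz: "div_atom x" "div_atom y" "div_atom z" "le A z (cp A x y)" "Trel i j k"
    using cyc unfolding basic_cycle_CX by auto
  have "n \<le> i \<or> n \<le> j" using xyz(5) cyc(2) unfolding Trel_def by linarith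
  then show ?thesis
  proof
    assume "n \<le> j"
    then have "b2 = Jset A (eatom z) n" using Bset_CX_cases[OF b(2,4)] True by auto
    then show ?thesis using Jset_coherent_in_class[OF b(1,3) xyz(1-4) _ _ z'] True by auto
  next
    assume "n \<le> i"
    then have "b1 = Jset A (eatom z) n" using Bset_CX_cases[OF b(1,3)] True by auto
    moreover have "le A z (cp A y x)" using xyz cp_comm div_atom_car by metis
    ultimately show ?thesis
      using Jset_coherent_in_class[OF b(2,4) xyz(2,1,3) _ _ _ z'] True C_cycle_swap by metis
  qed
qed

lemma Bset_coherent:
  assumes b: "b1 \<in> Bset A E n" "b2 \<in> Bset A E n" "b3 \<in> Bset A E n"
    and m: "u \<in> b1" "v \<in> b2" "w \<in> b3" "w' \<in> b3" and cyc: "C_cycle A E u v w"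
  shows "\<exists>u'\<in>b1. \<exists>v'\<in>b2. C_cycle A E u' v' w'"
proof (cases "w = w'")
  case True then show ?thesis using m cyc by blast
next
  case False
  then obtain a where a: "div_atom_in A E a" "b3 = Jset A a n" using Bset_nonsingleton b(3) m by blast
  obtain z k where z: "w = CX z k" "div_atom z" "eatom z = a" "n \<le> k"
    using Jset_memberE a m(3) by metis
  obtain z' k' where z': "w' = CX z' k'" "div_atom z'" "eatom z' = a" "n \<le> k'"
    using Jset_memberE a m(4) by metis
  have w'C: "w' \<in> C_atoms A" using Union_Bset b(3) m(4) by blast
  show ?thesis
  proof (cases u)
    case CId
    then have "b2 = b3" using cyc C_cycle_CId_left Bset_block_eq b m by metis
    then show ?thesis using m CId C_cycle_CId_left w'C by blast
  next
    case (CX x i)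
    show ?thesis
    proof (cases v)
      case CId
      then have "b1 = b3" using cyc C_cycle_CId_middle Bset_block_eq b m by metis
      then show ?thesis using m CId C_cycle_CId_middle w'C by blast
    next
      case (CX y j)
      then show ?thesis
        using Bset_coherent_CX[OF b(1,2)] m \<open>u = CX x i\<close> cyc z z' C_cycle_CX by auto
    qed
  qed
qed

theorem Bset_atoms_of_subalgebra:
  "\<exists>S. subalgebra (CEA A E) S \<and> {b. atom_in (CEA A E) S b} = Bset A E n"
proof (intro exI conjI)
  let ?S = "block_unions (C_atoms A) (Bset A E n)"
  note P = Bset_partition[of n]
  have "{CId} \<in> ?S" using block_unions_closed(3)[OF P] unfolding Bset_def by blast
  moreover have "?S \<subseteq> Pow (C_atoms A)" unfolding block_unions_def by blast
  moreover note block_unions_closed[OF P]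
    block_unions_product_closed[OF P C_cycle_C_atoms Bset_coherent]
  ultimately show "subalgebra (CEA A E) ?S"
    unfolding subalgebra_def closed_under_def CEA_def by simp
  show "{b. atom_in (CEA A E) ?S b} = Bset A E n"
    using minimal_block_unions_iff[OF P] by (auto simp: atom_in_CEA_iff)
qed

end

theorem lemma4:
  fixes A :: "'a ra" and E :: "'a set" and n :: nat
  assumes "relation_algebra A" and "finite (car A)"
    and "symmetric_on A (car A)" and "integral_on A (car A)"
    and "subalgebra A E"
    and "finite E" and "symmetric_on A E" and "integral_on A E"
    and "special_extension A E"
  shows "\<exists>S. subalgebra (CEA A E) S \<and> {b. atom_in (CEA A E) S b} = Bset A E n"
proof -
  interpret special_extension_setting A E
    using assms by unfold_locales
  show ?thesis by (rule Bset_atoms_of_subalgebra)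
qed

end
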